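(* Let $k$ be a field, $H_4$ the Sweedler four-dimensional Hopf algebra, and $E_2\subset H_4$ the subalgebra generated by $h$ (the algebra of dual numbers), made an $H_4$-comodule algebra via the restriction of $\Delta$. Then $\mathcal{H}^0(H_4,E_2)=k^\times$ and $\mathcal{H}^1(H_4,E_2)$ has exactly two elements, the classes of $1\otimes 1$ and $1\otimes g$.
   Context: $H_4$ is the $k$-algebra generated by $g,h$ with $g^2=1$, $h^2=0$, $gh+hg=0$, with Hopf structure $\Delta(g)=g\otimes g$, $\Delta(h)=h\otimes g+1\otimes h$, $\varepsilon(g)=1$, $\varepsilon(h)=0$, $\sigma(g)=g$, $\sigma(gh)=gh$. Since $\Delta(E_2)\subseteq E_2\otimes H_4$, $E_2$ is an $H_4$-comodule algebra. General non-abelian Hopf cohomology of a Hopf algebra $H$ with coefficients in an $H$-comodule algebra $E$ (coaction $\Delta_E$ an algebra map): with $d^0(x)=\Delta_E(x)$, $d^1(x)=x\otimes1$ and $d^0(X)=(\Delta_E\otimes\mathrm{id})(X)$, $d^1(X)=(\mathrm{id}\otimes\Delta_H)(X)$, $d^2(X)=X\otimes1$: $\mathcal{H}^0(H,E)=\{x\in E^\times: d^0(x)=d^1(x)\}$; $\mathcal{Z}^1(H,E)=\{X\in(E\otimes H)^\times: d^2(X)d^0(X)=d^1(X)\}$; $E^\times$ acts on the right by $X\leftharpoonup x=d^1(x^{-1})Xd^0(x)$; $\mathcal{H}^1(H,E)$ is the orbit set. $D^\times$ denotes units of an algebra $D$. *)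

theory Defs
  imports Main
begin

text \<open>An element of an algebra with (finite) basis 'b over the field 'k is its
coefficient function 'b => 'k.  The multiplication is given by structure
constants c a b z = coefficient of basis vector z in the product a*b.\<close>

definition bv :: "'b \<Rightarrow> 'b \<Rightarrow> 'k::field" where
  "bv a = (\<lambda>z. if z = a then 1 else 0)"

definition mulc :: "('b \<Rightarrow> 'b \<Rightarrow> 'b \<Rightarrow> 'k::field) \<Rightarrow> ('b \<Rightarrow> 'k) \<Rightarrow> ('b \<Rightarrow> 'k) \<Rightarrow> ('b \<Rightarrow> 'k)" where
  "mulc c x y = (\<lambda>z. \<Sum>a\<in>UNIV. \<Sum>b\<in>UNIV. x a * y b * c a b z)"

definition tensc :: "('a \<Rightarrow> 'a \<Rightarrow> 'a \<Rightarrow> 'k::field) \<Rightarrow> ('b \<Rightarrow> 'b \<Rightarrow> 'b \<Rightarrow> 'k)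
    \<Rightarrow> ('a \<times> 'b) \<Rightarrow> ('a \<times> 'b) \<Rightarrow> ('a \<times> 'b) \<Rightarrow> 'k" where
  "tensc c1 c2 = (\<lambda>(a1,a2) (b1,b2) (z1,z2). c1 a1 b1 z1 * c2 a2 b2 z2)"

definition lin :: "('b \<Rightarrow> ('c \<Rightarrow> 'k::field)) \<Rightarrow> ('b \<Rightarrow> 'k) \<Rightarrow> ('c \<Rightarrow> 'k)" where
  "lin f x = (\<lambda>z. \<Sum>a\<in>UNIV. x a * f a z)"

definition is_unit_alg :: "('b \<Rightarrow> 'b \<Rightarrow> 'b \<Rightarrow> 'k::field) \<Rightarrow> ('b \<Rightarrow> 'k) \<Rightarrow> ('b \<Rightarrow> 'k) \<Rightarrow> bool" where
  "is_unit_alg c u x \<longleftrightarrow> (\<exists>y. mulc c x y = u \<and> mulc c y x = u)"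

text \<open>Basis of H4: 1, g, h, gh.\<close>
datatype hb = One | G | Hh | GH

lemma UNIV_hb: "(UNIV :: hb set) = {One, G, Hh, GH}"
  by (auto intro: hb.exhaust)

instance hb :: finite
  by standard (simp add: UNIV_hb)

text \<open>Basis of E2 (the subalgebra of H4 generated by h): 1, h.\<close>
datatype eb = E1 | EH

lemma UNIV_eb: "(UNIV :: eb set) = {E1, EH}"
  by (auto intro: eb.exhaust)

instance eb :: finite
  by standard (simp add: UNIV_eb)

text \<open>Products of basis vectors of H4, using g^2 = 1, h^2 = 0, gh + hg = 0.\<close>
fun hprod :: "hb \<Rightarrow> hb \<Rightarrow> (hb \<Rightarrow> 'k::field)" where
  "hprod One b = bv b"
| "hprod a One = bv a"
| "hprod G G = bv One"
| "hprod G Hh = bv GH"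
| "hprod G GH = bv Hh"
| "hprod Hh G = (\<lambda>z. - bv GH z)"
| "hprod Hh Hh = (\<lambda>z. 0)"
| "hprod Hh GH = (\<lambda>z. 0)"
| "hprod GH G = (\<lambda>z. - bv Hh z)"
| "hprod GH Hh = (\<lambda>z. 0)"
| "hprod GH GH = (\<lambda>z. 0)"

definition hc :: "hb \<Rightarrow> hb \<Rightarrow> hb \<Rightarrow> 'k::field" where
  "hc a b z = hprod a b z"

fun eprod :: "eb \<Rightarrow> eb \<Rightarrow> (eb \<Rightarrow> 'k::field)" where
  "eprod E1 b = bv b"
| "eprod EH E1 = bv EH"
| "eprod EH EH = (\<lambda>z. 0)"

definition ec :: "eb \<Rightarrow> eb \<Rightarrow> eb \<Rightarrow> 'k::field" where
  "ec a b z = eprod a b z"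

text \<open>Comultiplication of H4 on basis vectors:
  Delta(1) = 1\<otimes>1, Delta(g) = g\<otimes>g, Delta(h) = h\<otimes>g + 1\<otimes>h,
  Delta(gh) = Delta(g)Delta(h) = gh\<otimes>1 + g\<otimes>gh.\<close>
fun deltaH :: "hb \<Rightarrow> (hb \<times> hb \<Rightarrow> 'k::field)" where
  "deltaH One = bv (One, One)"
| "deltaH G = bv (G, G)"
| "deltaH Hh = (\<lambda>z. bv (Hh, G) z + bv (One, Hh) z)"
| "deltaH GH = (\<lambda>z. bv (GH, One) z + bv (G, GH) z)"

text \<open>Coaction of H4 on E2: restriction of Delta, landing in E2 \<otimes> H4.\<close>
fun deltaE :: "eb \<Rightarrow> (eb \<times> hb \<Rightarrow> 'k::field)" where
  "deltaE E1 = bv (E1, One)"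
| "deltaE EH = (\<lambda>z. bv (EH, G) z + bv (E1, Hh) z)"

abbreviation mulE :: "(eb \<Rightarrow> 'k::field) \<Rightarrow> (eb \<Rightarrow> 'k) \<Rightarrow> (eb \<Rightarrow> 'k)" where
  "mulE \<equiv> mulc ec"
abbreviation mulEH :: "(eb \<times> hb \<Rightarrow> 'k::field) \<Rightarrow> (eb \<times> hb \<Rightarrow> 'k) \<Rightarrow> (eb \<times> hb \<Rightarrow> 'k)" where
  "mulEH \<equiv> mulc (tensc ec hc)"
abbreviation mulEHH :: "(eb \<times> hb \<times> hb \<Rightarrow> 'k::field) \<Rightarrow> (eb \<times> hb \<times> hb \<Rightarrow> 'k) \<Rightarrow> (eb \<times> hb \<times> hb \<Rightarrow> 'k)" where
  "mulEHH \<equiv> mulc (tensc ec (tensc hc hc))"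

definition oneE :: "eb \<Rightarrow> 'k::field" where "oneE = bv E1"
definition oneEH :: "eb \<times> hb \<Rightarrow> 'k::field" where "oneEH = bv (E1, One)"

definition d0 :: "(eb \<Rightarrow> 'k::field) \<Rightarrow> (eb \<times> hb \<Rightarrow> 'k)" where
  "d0 x = lin deltaE x"
definition d1 :: "(eb \<Rightarrow> 'k::field) \<Rightarrow> (eb \<times> hb \<Rightarrow> 'k)" where
  "d1 x = (\<lambda>(e, h). x e * bv One h)"

text \<open>D^0 = Delta_E \<otimes> id, D^1 = id \<otimes> Delta_H, D^2(X) = X \<otimes> 1.\<close>
definition D0 :: "(eb \<times> hb \<Rightarrow> 'k::field) \<Rightarrow> (eb \<times> hb \<times> hb \<Rightarrow> 'k)" where
  "D0 X = lin (\<lambda>(a, b) (z1, z2, z3). deltaE a (z1, z2) * bv b z3) X"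
definition D1 :: "(eb \<times> hb \<Rightarrow> 'k::field) \<Rightarrow> (eb \<times> hb \<times> hb \<Rightarrow> 'k)" where
  "D1 X = lin (\<lambda>(a, b) (z1, z2, z3). bv a z1 * deltaH b (z2, z3)) X"
definition D2 :: "(eb \<times> hb \<Rightarrow> 'k::field) \<Rightarrow> (eb \<times> hb \<times> hb \<Rightarrow> 'k)" where
  "D2 X = (\<lambda>(z1, z2, z3). X (z1, z2) * bv One z3)"

definition unitsE :: "(eb \<Rightarrow> 'k::field) set" where
  "unitsE = {x. is_unit_alg ec oneE x}"
definition unitsEH :: "(eb \<times> hb \<Rightarrow> 'k::field) set" where
  "unitsEH = {X. is_unit_alg (tensc ec hc) oneEH X}"

definition H0 :: "(eb \<Rightarrow> 'k::field) set" where
  "H0 = {x \<in> unitsE. d0 x = d1 x}"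

definition Z1 :: "(eb \<times> hb \<Rightarrow> 'k::field) set" where
  "Z1 = {X \<in> unitsEH. mulEHH (D2 X) (D0 X) = D1 X}"

text \<open>Orbit of X under the right action X \<leftharpoonup> x = d^1(x^{-1}) X d^0(x), x \<in> E^\<times>.\<close>
definition orbit1 :: "(eb \<times> hb \<Rightarrow> 'k::field) \<Rightarrow> (eb \<times> hb \<Rightarrow> 'k) set" where
  "orbit1 X = {mulEH (mulEH (d1 y) X) (d0 x) | x y. mulE x y = oneE \<and> mulE y x = oneE}"

definition H1 :: "(eb \<times> hb \<Rightarrow> 'k::field) set set" where
  "H1 = orbit1 ` Z1"

end

theory Submission
  imports Defs
begin

(* Everything is computed in coordinates with respect to the bases {1,h} of E2 and
   {1,g,h,gh} of H4.
   - A unit of E2 is x = a + b h with a <> 0, and x^{-1} = a^{-1} - b a^{-2} h (unit_E_coords).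
     The 0-cocycle condition Delta_E(x) = x(x)1 forces b = 0, giving H^0 = k^x.
   - Two one-parameter families of 1-cocycles, one_family t and g_family t, are the
     images of 1(x)1 and 1(x)g under the gauge action of 1 + t h.  The gauge action of a
     unit a + b h shifts the parameter by b/a (one_family_gauge, g_family_gauge); by the
     general lemma orbit_shift_family each family is therefore a single orbit.
   - Conversely the cocycle identity, read off coordinate by coordinate, shows that the
     (E1,1) and (E1,g) coefficients of a cocycle are complementary idempotents, and the
     remaining coordinates are then determined by one free parameter: every cocycle lies
     in one of the two families (Z1_classification).
   - The two orbits differ since their (E1,1) coefficients are 1 and 0 respectively. *)

lemma sum_eb: "(\<Sum>x\<in>(UNIV::eb set). f x) = f E1 + f EH"
  by (simp add: UNIV_eb)

lemma sum_hb: "(\<Sum>x\<in>(UNIV::hb set). f x) = f One + f G + f Hh + f GH"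
  by (simp add: UNIV_hb add.assoc)

lemma sum_UNIV_prod:
  "(\<Sum>x\<in>(UNIV::('a::finite \<times> 'b::finite) set). f x) = (\<Sum>a\<in>UNIV. \<Sum>b\<in>UNIV. f (a, b))"
  using sum.cartesian_product[of "\<lambda>a b. f (a, b)" UNIV UNIV] by simp

lemma bv_simps [simp]: "bv a a = 1" "a \<noteq> b \<Longrightarrow> bv a b = 0"
  by (auto simp: bv_def)

lemma bv_pair: "bv (a, b) (c, d) = (bv a c * bv b d :: 'k::field)"
  by (simp add: bv_def)

text \<open>Unfolding these rules turns every product or coboundary of explicit elements into
  a finite sum of coefficients, which the simplifier then evaluates.\<close>
lemmas coord_simps = bv_pair mulc_def sum_eb sum_hb sum_UNIV_prod tensc_def hc_def ec_def
  D0_def D1_def D2_def d0_def d1_def lin_def oneE_def oneEH_def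

lemma ext_eb: "f E1 = g E1 \<Longrightarrow> f EH = g EH \<Longrightarrow> f = g"
  by (rule ext, case_tac x) auto

lemma ext_eb_hb: "(\<And>h. f (E1, h) = g (E1, h)) \<Longrightarrow> (\<And>h. f (EH, h) = g (EH, h)) \<Longrightarrow> f = g"
  by (rule ext, case_tac x, case_tac a) auto

lemma ext_triple: "(\<And>z1 z2 z3. f (z1, z2, z3) = g (z1, z2, z3)) \<Longrightarrow> f = g"
  by (rule ext, case_tac x) auto

lemma unit_E_coords:
  fixes x y :: "eb \<Rightarrow> 'k::field"
  assumes "mulE x y = oneE"
  shows "x E1 \<noteq> 0" "y E1 = inverse (x E1)" "y EH = - x EH / (x E1 * x E1)"
proof -
  have unit_coeff: "x E1 * y E1 = 1"
    using fun_cong[OF assms, of E1] by (simp add: coord_simps)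
  have h_coeff: "x E1 * y EH + x EH * y E1 = 0"
    using fun_cong[OF assms, of EH] by (simp add: coord_simps)
  show nz: "x E1 \<noteq> 0" using unit_coeff by auto
  show y1: "y E1 = inverse (x E1)" using inverse_unique[OF unit_coeff] by simp
  from h_coeff have "x E1 * y EH = - x EH * y E1" by (simp add: eq_neg_iff_add_eq_0)
  then show "y EH = - x EH / (x E1 * x E1)" using y1 nz by (simp add: field_simps)
qed

definition dual :: "'k::field \<Rightarrow> 'k \<Rightarrow> eb \<Rightarrow> 'k" where
  "dual a b = (\<lambda>e. case e of E1 \<Rightarrow> a | EH \<Rightarrow> b)"

lemma dual_inverse: "mulE (dual 1 b) (dual 1 (- b)) = (oneE :: eb \<Rightarrow> 'k::field)"
  by (intro ext_eb; simp add: coord_simps dual_def)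

lemma H0_eq: "(H0 :: (eb \<Rightarrow> 'k::field) set) = {(\<lambda>e. c * oneE e) | c. c \<noteq> 0}"
proof (intro equalityI subsetI)
  fix x :: "eb \<Rightarrow> 'k" assume x: "x \<in> H0"
  then obtain y where "mulE x y = oneE" by (auto simp: H0_def unitsE_def is_unit_alg_def)
  then have nz: "x E1 \<noteq> 0" by (rule unit_E_coords)
  have "d0 x (E1, Hh) = d1 x (E1, Hh)" using x by (simp add: H0_def)
  then have "x EH = 0" by (simp add: coord_simps)
  then have "x = (\<lambda>e. x E1 * oneE e)" by (intro ext_eb; simp add: oneE_def)
  with nz show "x \<in> {(\<lambda>e. c * oneE e) | c. c \<noteq> 0}" by blast
next
  fix x :: "eb \<Rightarrow> 'k" assume "x \<in> {(\<lambda>e. c * oneE e) | c. c \<noteq> 0}"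
  then obtain c :: 'k where c: "c \<noteq> 0" and x: "x = (\<lambda>e. c * oneE e)" by blast
  have "mulE x (\<lambda>e. inverse c * oneE e) = oneE" "mulE (\<lambda>e. inverse c * oneE e) x = oneE"
    unfolding x using c by (intro ext_eb; simp add: coord_simps)+
  then have "x \<in> unitsE" unfolding unitsE_def is_unit_alg_def by blast
  moreover have "d0 x = d1 x" unfolding x by (intro ext_eb_hb; simp add: coord_simps split: hb.split)
  ultimately show "x \<in> H0" by (simp add: H0_def)
qed

text \<open>The gauge action X \<leftharpoonup> x = d^1(x^{-1}) X d^0(x), with y standing for x^{-1}.\<close>
definition gauge :: "(eb \<times> hb \<Rightarrow> 'k::field) \<Rightarrow> (eb \<Rightarrow> 'k) \<Rightarrow> (eb \<Rightarrow> 'k) \<Rightarrow> (eb \<times> hb \<Rightarrow> 'k)" where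
  "gauge X x y = mulEH (mulEH (d1 y) X) (d0 x)"

lemma orbit1_gauge: "orbit1 X = {gauge X x y | x y. mulE x y = oneE \<and> mulE y x = oneE}"
  by (simp add: orbit1_def gauge_def)

text \<open>A family of elements on which the gauge action of a + b h acts by the translation
  t \<mapsto> t + b/a of the parameter is a single orbit: the translations by b/a exhaust k,
  already for a = 1.\<close>
lemma orbit_shift_family:
  fixes F :: "'k::field \<Rightarrow> eb \<times> hb \<Rightarrow> 'k"
  assumes shift: "\<And>t x y. mulE x y = oneE \<Longrightarrow> gauge (F t) x y = F (t + x EH / x E1)"
  shows "orbit1 (F t) = range F"
proof (intro equalityI subsetI)
  fix Z assume "Z \<in> orbit1 (F t)"
  then obtain x y where "Z = gauge (F t) x y" and "mulE x y = oneE"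
    by (auto simp: orbit1_gauge)
  with shift show "Z \<in> range F" by blast
next
  fix Z assume "Z \<in> range F"
  then obtain s where Z: "Z = F s" by auto
  have inv: "mulE (dual 1 (s - t)) (dual 1 (t - s)) = oneE"
            "mulE (dual 1 (t - s)) (dual 1 (s - t)) = (oneE :: eb \<Rightarrow> 'k)"
    using dual_inverse[of "s - t"] dual_inverse[of "t - s"] by simp_all
  have "gauge (F t) (dual 1 (s - t)) (dual 1 (t - s)) = F s"
    using shift[OF inv(1)] by (simp add: dual_def)
  with inv show "Z \<in> orbit1 (F t)" unfolding Z orbit1_gauge by force
qed

text \<open>The gauge transform of 1\<otimes>1 by 1 + t h:
  1\<otimes>1 + t (1\<otimes>h - h\<otimes>1 + h\<otimes>g) - t^2 h\<otimes>h.\<close>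
definition one_family :: "'k::field \<Rightarrow> eb \<times> hb \<Rightarrow> 'k" where
  "one_family t = (\<lambda>z. case z of (E1, One) \<Rightarrow> 1 | (E1, Hh) \<Rightarrow> t | (EH, One) \<Rightarrow> - t
     | (EH, G) \<Rightarrow> t | (EH, Hh) \<Rightarrow> - (t * t) | _ \<Rightarrow> 0)"

text \<open>The gauge transform of 1\<otimes>g by 1 + t h:
  1\<otimes>g + t (1\<otimes>gh + h\<otimes>1 - h\<otimes>g) - t^2 h\<otimes>gh.\<close>
definition g_family :: "'k::field \<Rightarrow> eb \<times> hb \<Rightarrow> 'k" where
  "g_family t = (\<lambda>z. case z of (E1, G) \<Rightarrow> 1 | (E1, GH) \<Rightarrow> t | (EH, One) \<Rightarrow> t
     | (EH, G) \<Rightarrow> - t | (EH, GH) \<Rightarrow> - (t * t) | _ \<Rightarrow> 0)"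

lemma one_family_0: "one_family 0 = (bv (E1, One) :: _ \<Rightarrow> 'k::field)"
  by (intro ext_eb_hb; simp add: one_family_def split: hb.split)

lemma g_family_0: "g_family 0 = (bv (E1, G) :: _ \<Rightarrow> 'k::field)"
  by (intro ext_eb_hb; simp add: g_family_def split: hb.split)

lemma one_family_gauge:
  assumes "mulE x y = oneE"
  shows "gauge (one_family t) x y = one_family (t + x EH / x E1)"
  using unit_E_coords[OF assms]
  by (intro ext_eb_hb; simp add: gauge_def coord_simps one_family_def split: hb.split;
      simp add: field_simps)

lemma g_family_gauge:
  assumes "mulE x y = oneE"
  shows "gauge (g_family t) x y = g_family (t + x EH / x E1)"
  using unit_E_coords[OF assms]
  by (intro ext_eb_hb; simp add: gauge_def coord_simps g_family_def split: hb.split;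
      simp add: field_simps)

lemma orbit_one: "orbit1 (bv (E1, One)) = range (one_family :: 'k::field \<Rightarrow> _)"
  using orbit_shift_family[OF one_family_gauge, of 0] by (simp add: one_family_0)

lemma orbit_g: "orbit1 (bv (E1, G)) = range (g_family :: 'k::field \<Rightarrow> _)"
  using orbit_shift_family[OF g_family_gauge, of 0] by (simp add: g_family_0)

text \<open>The classes differ: every member of the first orbit has (E1,1) coefficient 1,
  while 1\<otimes>g has (E1,1) coefficient 0.\<close>
lemma orbits_distinct: "orbit1 (bv (E1, One)) \<noteq> (orbit1 (bv (E1, G)) :: (eb \<times> hb \<Rightarrow> 'k::field) set)"
proof
  assume "orbit1 (bv (E1, One)) = (orbit1 (bv (E1, G)) :: (eb \<times> hb \<Rightarrow> 'k) set)"
  then have "g_family 0 \<in> range (one_family :: 'k \<Rightarrow> _)"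
    by (simp add: orbit_one orbit_g)
  then obtain s :: 'k where "g_family 0 = one_family s" by auto
  then have "g_family 0 (E1, One) = (one_family s (E1, One) :: 'k)" by simp
  then show False by (simp add: one_family_def g_family_def)
qed

text \<open>1\<otimes>1 and 1\<otimes>g are 1-cocycles, since 1 and g are grouplike.\<close>
lemma grouplike_cocycle:
  assumes "b = One \<or> b = G"
  shows "(bv (E1, b) :: _ \<Rightarrow> 'k::field) \<in> Z1"
proof -
  have "mulEH (bv (E1, b)) (bv (E1, b)) = (oneEH :: _ \<Rightarrow> 'k)"
    using assms by (elim disjE; intro ext_eb_hb; simp add: coord_simps split: hb.split)
  moreover have "mulEHH (D2 (bv (E1, b))) (D0 (bv (E1, b))) = (D1 (bv (E1, b)) :: _ \<Rightarrow> 'k)"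
  proof (rule ext_triple)
    fix z1 z2 z3
    show "mulEHH (D2 (bv (E1, b))) (D0 (bv (E1, b))) (z1, z2, z3) = (D1 (bv (E1, b)) (z1, z2, z3) :: 'k)"
      using assms by (cases z1; cases z2; cases z3) (auto simp: coord_simps)
  qed
  ultimately show ?thesis unfolding Z1_def unitsEH_def is_unit_alg_def by blast
qed

lemma cocycle_coord:
  assumes "X \<in> Z1"
  shows "mulEHH (D2 X) (D0 X) (e, a, b) = D1 X (e, a, b)"
  using assms by (simp add: Z1_def)

text \<open>The (E1,1) and (E1,g) coefficients of a cocycle are complementary idempotents,
  and the one that vanishes kills the corresponding h-coefficient as well.\<close>
lemma cocycle_leading_coeffs:
  fixes X :: "eb \<times> hb \<Rightarrow> 'k::field"
  assumes X: "X \<in> Z1"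
  shows "(X (E1, One) = 1 \<and> X (E1, G) = 0 \<and> X (E1, GH) = 0)
       \<or> (X (E1, One) = 0 \<and> X (E1, G) = 1 \<and> X (E1, Hh) = 0)"
proof -
  obtain Y where "mulEH X Y = oneEH"
    using X by (auto simp: Z1_def unitsEH_def is_unit_alg_def)
  from fun_cong[OF this, of "(E1, One)"]
  have unit: "X (E1, One) * Y (E1, One) + X (E1, G) * Y (E1, G) = 1"
    by (simp add: coord_simps algebra_simps)
  note c = cocycle_coord[OF X]
  have idem_one: "X (E1, One) * X (E1, One) = X (E1, One)"
    using c[of E1 One One] by (simp add: coord_simps)
  have idem_g: "X (E1, G) * X (E1, G) = X (E1, G)"
    using c[of E1 G G] by (simp add: coord_simps)
  have orth: "X (E1, One) * X (E1, G) = 0" using c[of E1 One G] by (simp add: coord_simps)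
  have orth_gh: "X (E1, One) * X (E1, GH) = 0" using c[of E1 One GH] by (simp add: coord_simps)
  have fix_h: "X (E1, One) * X (E1, Hh) = X (E1, Hh)" using c[of E1 One Hh] by (simp add: coord_simps)
  consider "X (E1, One) = 1" | "X (E1, One) = 0"
    using idem_one by (metis mult_cancel_right1 mult_zero_left)
  then show ?thesis
  proof cases
    case 1
    then show ?thesis using orth orth_gh by simp
  next
    case 2
    then have "X (E1, G) \<noteq> 0" using unit by auto
    then have "X (E1, G) = 1" using idem_g by (metis mult_cancel_right1)
    with 2 show ?thesis using fix_h by simp
  qed
qed

lemma cocycle_in_one_family:
  fixes X :: "eb \<times> hb \<Rightarrow> 'k::field"
  assumes X: "X \<in> Z1" and lead: "X (E1, One) = 1" "X (E1, G) = 0" "X (E1, GH) = 0"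
  shows "X = one_family (X (E1, Hh))"
proof -
  note c = cocycle_coord[OF X]
  have "X (EH, One) = - X (E1, Hh)" "X (EH, G) = X (E1, Hh)"
       "X (EH, Hh) = - (X (E1, Hh) * X (E1, Hh))" "X (EH, GH) = 0"
    using c[of E1 Hh One] c[of E1 Hh G] c[of E1 Hh Hh] c[of E1 Hh GH] lead
    by (simp_all add: coord_simps algebra_simps eq_neg_iff_add_eq_0)
  with lead show ?thesis by (intro ext_eb_hb; simp add: one_family_def split: hb.split)
qed

lemma cocycle_in_g_family:
  fixes X :: "eb \<times> hb \<Rightarrow> 'k::field"
  assumes X: "X \<in> Z1" and lead: "X (E1, One) = 0" "X (E1, G) = 1" "X (E1, Hh) = 0"
  shows "X = g_family (X (E1, GH))"
proof -
  note c = cocycle_coord[OF X]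
  have "X (EH, One) = X (E1, GH)" "X (EH, G) = - X (E1, GH)"
       "X (EH, Hh) = 0" "X (EH, GH) = - (X (E1, GH) * X (E1, GH))"
    using c[of E1 GH One] c[of E1 GH G] c[of E1 GH Hh] c[of E1 GH GH] lead
    by (simp_all add: coord_simps algebra_simps eq_neg_iff_add_eq_0)
  with lead show ?thesis by (intro ext_eb_hb; simp add: g_family_def split: hb.split)
qed

lemma Z1_classification:
  fixes X :: "eb \<times> hb \<Rightarrow> 'k::field"
  assumes "X \<in> Z1"
  shows "X \<in> range one_family \<or> X \<in> range g_family"
  using cocycle_leading_coeffs[OF assms] cocycle_in_one_family[OF assms]
    cocycle_in_g_family[OF assms] by blast

lemma H1_eq:
  "(H1 :: (eb \<times> hb \<Rightarrow> 'k::field) set set) = {orbit1 (bv (E1, One)), orbit1 (bv (E1, G))}"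
proof (intro equalityI subsetI)
  fix Cls assume "Cls \<in> (H1 :: (eb \<times> hb \<Rightarrow> 'k) set set)"
  then obtain X where X: "X \<in> Z1" and Cls: "Cls = orbit1 X" by (auto simp: H1_def)
  from Z1_classification[OF X] show "Cls \<in> {orbit1 (bv (E1, One)), orbit1 (bv (E1, G))}"
  proof
    assume "X \<in> range one_family"
    then show ?thesis
      using Cls orbit_shift_family[OF one_family_gauge] orbit_one by auto
  next
    assume "X \<in> range g_family"
    then show ?thesis
      using Cls orbit_shift_family[OF g_family_gauge] orbit_g by auto
  qed
next
  fix Cls assume "Cls \<in> {orbit1 (bv (E1, One)), orbit1 (bv (E1, G)) :: (eb \<times> hb \<Rightarrow> 'k) set}"
  then show "Cls \<in> H1" using grouplike_cocycle unfolding H1_def by blast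
qed

theorem proposition1p6:
  shows "(H0 :: (eb \<Rightarrow> 'k::field) set) = {(\<lambda>e. c * oneE e) | c. c \<noteq> 0}
    \<and> (H1 :: (eb \<times> hb \<Rightarrow> 'k::field) set set) = {orbit1 (bv (E1, One)), orbit1 (bv (E1, G))}
    \<and> orbit1 (bv (E1, One)) \<noteq> (orbit1 (bv (E1, G)) :: (eb \<times> hb \<Rightarrow> 'k) set)"
  using H0_eq H1_eq orbits_distinct by blast

end
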